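(* Let $\mathcal G\subseteq\{1,\ldots,n\}^2$ satisfy $(i,j)\in\mathcal G\iff(j,i)\in\mathcal G$, and let $1\leq N\leq|\{(i,j)\in\mathcal G: i\leq j\}|$. Define the deviation $d_{ij}$ either as the absolute deviation $|[P_k]_{ij}-[\tilde P_{k-1}]_{ij}|$ or as the relative deviation $|[P_k]_{ij}-[\tilde P_{k-1}]_{ij}|/|[\tilde P_{k-1}]_{ij}|$ (in the relative case assume $[\tilde P_{k-1}]_{ij}\neq0$ for $(i,j)\in\mathcal G$). Suppose that the index-value pairs of $\mathcal E_k$ with index in $\mathcal G$ and $i\leq j$ are exactly $N$ pairs such that $d_{ij}\geq d_{lm}$ whenever $(i,j)$ is one of them and $(l,m)\in\mathcal G$, $l\leq m$, is not; that $\mathcal E_k$ is symmetric (i.e. $((i,j),\cdot)\in\mathcal E_k\iff((j,i),\cdot)\in\mathcal E_k$); and that $\mathcal E_k$ may contain arbitrary further pairs with indices outside $\mathcal G$. For $(i,j)\in\mathcal G$ define $[\hat\Delta_k]_{ij}=0$ if $((i,j),\cdot)\in\mathcal E_k$, and otherwise $[\hat\Delta_k]_{ij}=\min_{((l,m),\cdot)\in\mathcal E_k,\,(l,m)\in\mathcal G}|[\tilde P_k]_{lm}-[\tilde P_{k-1}]_{lm}|$ in the absolute case, respectively $$[\hat\Delta_k]_{ij}=|[\tilde P_k]_{ij}|\min_{((l,m),\cdot)\in\mathcal E_k,\,(l,m)\in\mathcal G}\frac{|[\tilde P_k]_{lm}-[\tilde P_{k-1}]_{lm}|}{|[\tilde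 P_{k-1}]_{lm}|}$$ in the relative case. Then $|[\Delta_k]_{ij}|\leq[\hat\Delta_k]_{ij}$ for all $(i,j)\in\mathcal G$.
   Context: Setting (event-triggered transmission): $\mathcal S_n$ is the set of real symmetric $n\times n$ matrices. At time step $k$ a covariance matrix $P_k$ (real symmetric positive semidefinite $n\times n$) and a buffer matrix $\tilde P_{k-1}\in\mathcal S_n$ are given. The event set $\mathcal E_k$ is a set of index-value pairs $((i,j),[P_k]_{ij})$, and $((i,j),\cdot)\in\mathcal E_k$ means some pair with index $(i,j)$ lies in $\mathcal E_k$. The updated buffer $\tilde P_k$ is defined by $[\tilde P_k]_{ij}=[P_k]_{ij}$ if $((i,j),\cdot)\in\mathcal E_k$ and $[\tilde P_k]_{ij}=[\tilde P_{k-1}]_{ij}$ otherwise. The buffer error is $\Delta_k=\tilde P_k-P_k$. *)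

theory Defs
  imports Complex_Main
begin

text \<open>n x n real matrices are represented as functions nat => nat => real,
  indices ranging over 1..n. An event set is a set of index-value pairs.\<close>

definition sym_mat :: "nat \<Rightarrow> (nat \<Rightarrow> nat \<Rightarrow> real) \<Rightarrow> bool" where
  "sym_mat n A \<longleftrightarrow> (\<forall>i\<in>{1..n}. \<forall>j\<in>{1..n}. A i j = A j i)"

definition psd_mat :: "nat \<Rightarrow> (nat \<Rightarrow> nat \<Rightarrow> real) \<Rightarrow> bool" where
  "psd_mat n A \<longleftrightarrow> sym_mat n A \<and>
     (\<forall>x :: nat \<Rightarrow> real. 0 \<le> (\<Sum>i=1..n. \<Sum>j=1..n. x i * A i j * x j))"

definition ev_idx :: "((nat \<times> nat) \<times> real) set \<Rightarrow> (nat \<times> nat) set" where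
  "ev_idx E = fst ` E"

definition buf_update ::
  "(nat \<Rightarrow> nat \<Rightarrow> real) \<Rightarrow> (nat \<Rightarrow> nat \<Rightarrow> real) \<Rightarrow> ((nat \<times> nat) \<times> real) set
   \<Rightarrow> nat \<Rightarrow> nat \<Rightarrow> real" where
  "buf_update P Pold E = (\<lambda>i j. if (i, j) \<in> ev_idx E then P i j else Pold i j)"

datatype dev_kind = Absolute | Relative

definition dev :: "dev_kind \<Rightarrow> (nat \<Rightarrow> nat \<Rightarrow> real) \<Rightarrow> (nat \<Rightarrow> nat \<Rightarrow> real) \<Rightarrow> nat \<Rightarrow> nat \<Rightarrow> real" where
  "dev k P Pold i j = (case k of
      Absolute \<Rightarrow> \<bar>P i j - Pold i j\<bar>
    | Relative \<Rightarrow> \<bar>P i j - Pold i j\<bar> / \<bar>Pold i j\<bar>)"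

definition Delta_hat ::
  "dev_kind \<Rightarrow> (nat \<times> nat) set \<Rightarrow> ((nat \<times> nat) \<times> real) set
   \<Rightarrow> (nat \<Rightarrow> nat \<Rightarrow> real) \<Rightarrow> (nat \<Rightarrow> nat \<Rightarrow> real) \<Rightarrow> nat \<Rightarrow> nat \<Rightarrow> real" where
  "Delta_hat k G E Pnew Pold i j =
     (if (i, j) \<in> ev_idx E then 0
      else (case k of
        Absolute \<Rightarrow> Min {\<bar>Pnew l m - Pold l m\<bar> | l m. (l, m) \<in> ev_idx E \<and> (l, m) \<in> G}
      | Relative \<Rightarrow> \<bar>Pnew i j\<bar> *
          Min {\<bar>Pnew l m - Pold l m\<bar> / \<bar>Pold l m\<bar> | l m. (l, m) \<in> ev_idx E \<and> (l, m) \<in> G}))"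

end

theory Submission
  imports Defs
begin

text \<open>An entry that is not transmitted keeps its old buffer value, so its buffer error is its own
  deviation. The selection rule only compares upper-triangular entries, but since the deviation,
  G and the event set are symmetric, every transmitted entry of G dominates every untransmitted
  one. So the error is at most the smallest deviation among transmitted entries, which the new
  buffer reveals because it agrees with P_k there.\<close>

lemma dev_swap:
  assumes "P a b = P b a" and "Pold a b = Pold b a"
  shows "dev k P Pold a b = dev k P Pold b a"
  unfolding dev_def by (metis assms)

lemma upper_triangle_representative:
  fixes G I :: "('a::linorder \<times> 'a) set"
  assumes G_sym: "\<And>a b. (a, b) \<in> G \<Longrightarrow> (b, a) \<in> G"
    and I_sym: "\<And>a b. (a, b) \<in> I \<longleftrightarrow> (b, a) \<in> I"
    and d_sym: "\<And>a b. (a, b) \<in> G \<Longrightarrow> d a b = d b a"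
    and "(i, j) \<in> G"
  shows "\<exists>a b. (a, b) \<in> G \<and> a \<le> b \<and> ((a, b) \<in> I \<longleftrightarrow> (i, j) \<in> I) \<and> d a b = d i j"
proof (cases "i \<le> j")
  case True
  then show ?thesis using \<open>(i, j) \<in> G\<close> by blast
next
  case False
  then show ?thesis
    using G_sym I_sym d_sym \<open>(i, j) \<in> G\<close> by (metis nle_le)
qed

lemma selected_dominate_unselected:
  fixes G I :: "('a::linorder \<times> 'a) set" and d :: "'a \<Rightarrow> 'a \<Rightarrow> 'b::linorder"
  assumes G_sym: "\<And>a b. (a, b) \<in> G \<Longrightarrow> (b, a) \<in> G"
    and I_sym: "\<And>a b. (a, b) \<in> I \<longleftrightarrow> (b, a) \<in> I"
    and d_sym: "\<And>a b. (a, b) \<in> G \<Longrightarrow> d a b = d b a"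
    and top: "\<And>a b c e. (a, b) \<in> G \<inter> I \<Longrightarrow> a \<le> b \<Longrightarrow> (c, e) \<in> G - I \<Longrightarrow> c \<le> e
                \<Longrightarrow> d c e \<le> d a b"
    and unselected: "(i, j) \<in> G - I" and selected: "(l, m) \<in> G \<inter> I"
  shows "d i j \<le> d l m"
proof -
  obtain a b where "(a, b) \<in> G - I" "a \<le> b" "d a b = d i j"
    using upper_triangle_representative[of G I d i j] assms by blast
  moreover obtain c e where "(c, e) \<in> G \<inter> I" "c \<le> e" "d c e = d l m"
    using upper_triangle_representative[of G I d l m] assms by blast
  ultimately show ?thesis using top by metis
qed

lemma buf_error_le_Delta_hat:
  assumes fin: "finite G"
    and unsent: "(i, j) \<notin> ev_idx E"
    and sent_ne: "G \<inter> ev_idx E \<noteq> {}"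
    and nz: "k = Relative \<Longrightarrow> Pold i j \<noteq> 0"
    and dominated: "\<And>l m. (l, m) \<in> G \<inter> ev_idx E \<Longrightarrow> dev k P Pold i j \<le> dev k P Pold l m"
  shows "\<bar>buf_update P Pold E i j - P i j\<bar> \<le> Delta_hat k G E (buf_update P Pold E) Pold i j"
proof -
  let ?B = "buf_update P Pold E"
  let ?m = "Min ((\<lambda>(l, m). dev k P Pold l m) ` (G \<inter> ev_idx E))"
  have B_unsent: "?B i j = Pold i j"
    using unsent by (simp add: buf_update_def)
  have dev_le_min: "dev k P Pold i j \<le> ?m"
    using fin sent_ne dominated by (auto simp: Min_ge_iff)
  have sent_devs: "(\<lambda>(l, m). dev k P Pold l m) ` (G \<inter> ev_idx E)
      = {dev k (buf_update P Pold E) Pold l m | l m. (l, m) \<in> ev_idx E \<and> (l, m) \<in> G}"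
    by (auto simp: buf_update_def dev_def)
  show ?thesis
  proof (cases k)
    case Absolute
    then show ?thesis
      using dev_le_min sent_devs unsent B_unsent
      by (simp add: Delta_hat_def dev_def abs_minus_commute)
  next
    case Relative
    have "\<bar>Pold i j - P i j\<bar> = \<bar>Pold i j\<bar> * dev k P Pold i j"
      using nz Relative by (simp add: dev_def abs_minus_commute)
    also have "\<dots> \<le> \<bar>Pold i j\<bar> * ?m"
      using dev_le_min by (rule mult_left_mono) simp
    finally show ?thesis
      using sent_devs unsent B_unsent Relative by (simp add: Delta_hat_def dev_def)
  qed
qed

theorem mainTheorem8:
  fixes n N :: nat
    and G :: "(nat \<times> nat) set"
    and P Pold :: "nat \<Rightarrow> nat \<Rightarrow> real"
    and E :: "((nat \<times> nat) \<times> real) set"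
    and k :: dev_kind
  assumes G_sub: "G \<subseteq> {1..n} \<times> {1..n}"
    and G_sym: "\<forall>i j. (i, j) \<in> G \<longleftrightarrow> (j, i) \<in> G"
    and N_ge: "1 \<le> N"
    and N_le: "N \<le> card {(i, j) \<in> G. i \<le> j}"
    and P_psd: "psd_mat n P"
    and Pold_sym: "sym_mat n Pold"
    and E_vals: "\<forall>i j v. ((i, j), v) \<in> E \<longrightarrow> i \<in> {1..n} \<and> j \<in> {1..n} \<and> v = P i j"
    and rel_nz: "k = Relative \<longrightarrow> (\<forall>(i, j) \<in> G. Pold i j \<noteq> 0)"
    and E_card: "card {p \<in> E. fst p \<in> G \<and> fst (fst p) \<le> snd (fst p)} = N"
    and E_top: "\<forall>p \<in> E. \<forall>l m. (fst p \<in> G \<and> fst (fst p) \<le> snd (fst p)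
                 \<and> (l, m) \<in> G \<and> l \<le> m \<and> (l, m) \<notin> ev_idx E)
               \<longrightarrow> dev k P Pold l m \<le> dev k P Pold (fst (fst p)) (snd (fst p))"
    and E_sym: "\<forall>i j. (i, j) \<in> ev_idx E \<longleftrightarrow> (j, i) \<in> ev_idx E"
  shows "\<forall>(i, j) \<in> G. \<bar>buf_update P Pold E i j - P i j\<bar>
            \<le> Delta_hat k G E (buf_update P Pold E) Pold i j"
proof (intro ballI, clarify)
  fix i j assume ij: "(i, j) \<in> G"
  have fin: "finite G"
    using G_sub finite_subset by blast
  \<comment> \<open>N \<ge> 1 makes the minimum in Delta_hat range over a nonempty set.\<close>
  have "{p \<in> E. fst p \<in> G \<and> fst (fst p) \<le> snd (fst p)} \<noteq> {}"
    using E_card N_ge by (metis card.empty not_one_le_zero)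
  then have sent_ne: "G \<inter> ev_idx E \<noteq> {}"
    by (force simp: ev_idx_def)
  have dev_sym: "dev k P Pold a b = dev k P Pold b a" if "(a, b) \<in> G" for a b
    using that G_sub P_psd Pold_sym
    by (intro dev_swap) (auto simp: psd_mat_def sym_mat_def)
  have top_selection: "dev k P Pold c e \<le> dev k P Pold a b"
    if "(a, b) \<in> G \<inter> ev_idx E" "a \<le> b" "(c, e) \<in> G - ev_idx E" "c \<le> e" for a b c e
    using that E_top by (force simp: ev_idx_def)
  show "\<bar>buf_update P Pold E i j - P i j\<bar> \<le> Delta_hat k G E (buf_update P Pold E) Pold i j"
  proof (cases "(i, j) \<in> ev_idx E")
    case True
    then show ?thesis by (simp add: buf_update_def Delta_hat_def)
  next
    case False
    show ?thesis
      using fin False sent_ne rel_nz ij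
        selected_dominate_unselected[of G "ev_idx E" "dev k P Pold", OF _ _ dev_sym top_selection]
        G_sym E_sym
      by (intro buf_error_le_Delta_hat) auto
  qed
qed

end
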